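(* Let $D=(Q,\Sigma,\delta,q_0,A)$ be an f-minimal DFA, and let $p\in F(D)$ and $q\in Q$ with $L(p)\sim L(q)$. Then $p=q$.
   Context: All DFAs are complete and all states are reachable from the start state. $L\sim L'$ means $L\triangle L'$ is finite; for DFAs, $D\sim D'$ means $L(D)\sim L(D')$. For a state $r$, $L(r)$ is the language recognized by $(Q,\Sigma,\delta,r,A)$. The finite part $F(D)$ is the set of states $r$ such that $\{w\in\Sigma^*:\delta(q_0,w)=r\}$ is finite. A DFA $D$ with state set $Q$ is \emph{f-minimal} if every DFA $D'$ (with state set $Q'$) satisfying $D\sim D'$ has $|Q|\le|Q'|$. *)

theory Defs
  imports Main
begin

record ('q, 'a) dfa =
  states :: "'q set"
  alpha  :: "'a set"
  trans  :: "'q \<Rightarrow> 'a \<Rightarrow> 'q"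
  init   :: "'q"
  accept :: "'q set"

definition delta_hat :: "('q, 'a) dfa \<Rightarrow> 'q \<Rightarrow> 'a list \<Rightarrow> 'q" where
  "delta_hat D r w = foldl (trans D) r w"

definition is_dfa :: "('q, 'a) dfa \<Rightarrow> bool" where
  "is_dfa D \<longleftrightarrow>
     finite (states D) \<and> finite (alpha D) \<and>
     init D \<in> states D \<and> accept D \<subseteq> states D \<and>
     (\<forall>r\<in>states D. \<forall>a\<in>alpha D. trans D r a \<in> states D) \<and>
     (\<forall>r\<in>states D. \<exists>w\<in>lists (alpha D). delta_hat D (init D) w = r)"

definition lang_from :: "('q, 'a) dfa \<Rightarrow> 'q \<Rightarrow> 'a list set" where
  "lang_from D r = {w \<in> lists (alpha D). delta_hat D r w \<in> accept D}"

definition lang :: "('q, 'a) dfa \<Rightarrow> 'a list set" where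
  "lang D = lang_from D (init D)"

definition fequiv :: "'a set \<Rightarrow> 'a set \<Rightarrow> bool" where
  "fequiv L L' \<longleftrightarrow> finite ((L - L') \<union> (L' - L))"

definition finite_part :: "('q, 'a) dfa \<Rightarrow> 'q set" where
  "finite_part D = {r \<in> states D.
     finite {w \<in> lists (alpha D). delta_hat D (init D) w = r}}"

text \<open>f-minimality: competitor DFAs over the same alphabet; their state sets are
  taken in type nat (every finite state set can be encoded there).\<close>
definition f_minimal :: "('q, 'a) dfa \<Rightarrow> bool" where
  "f_minimal D \<longleftrightarrow> is_dfa D \<and>
     (\<forall>D' :: (nat, 'a) dfa. is_dfa D' \<and> alpha D' = alpha D \<and> fequiv (lang D) (lang D')
        \<longrightarrow> card (states D) \<le> card (states D'))"

end

(* Suppose p \<noteq> q. Redirect every transition into p (and the start state, if it is p) to q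
   and delete p. If p is not reachable from q, a run changes only after its first visit to p,
   which ends one of the finitely many words leading to p; the rest of the word is then read
   from q instead of p, so it is misclassified only if it lies in the finite set L(p) \<triangle> L(q).
   The smaller automaton is thus almost equivalent to D, contradicting f-minimality. Hence q
   reaches p, so q lies in F(D) too, and by symmetry p reaches q. The resulting loop through p
   could be pumped into infinitely many words leading to p, so it is empty and p = q. *)

theory Submission
  imports Defs
begin

lemma delta_hat_Nil [simp]: "delta_hat D r [] = r"
  by (simp add: delta_hat_def)

lemma delta_hat_Cons [simp]: "delta_hat D r (a # w) = delta_hat D (trans D r a) w"
  by (simp add: delta_hat_def)

lemma delta_hat_append: "delta_hat D r (u @ v) = delta_hat D (delta_hat D r u) v"
  by (simp add: delta_hat_def)

definition reaches :: "('q, 'a) dfa \<Rightarrow> 'q \<Rightarrow> 'q \<Rightarrow> bool" where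
  "reaches D r s \<longleftrightarrow> (\<exists>w\<in>lists (alpha D). delta_hat D r w = s)"

lemma reaches_refl [simp]: "reaches D r r"
  unfolding reaches_def by (intro bexI[of _ "[]"]) simp_all

lemma reaches_step:
  "a \<in> alpha D \<Longrightarrow> reaches D (trans D r a) s \<Longrightarrow> reaches D r s"
  unfolding reaches_def by (metis delta_hat_Cons lists.Cons)

lemma fequiv_sym: "fequiv L L' \<longleftrightarrow> fequiv L' L"
  by (simp add: fequiv_def Un_commute)

definition is_complete_dfa :: "('q, 'a) dfa \<Rightarrow> bool" where
  "is_complete_dfa D \<longleftrightarrow>
     finite (states D) \<and> finite (alpha D) \<and>
     init D \<in> states D \<and> accept D \<subseteq> states D \<and>
     (\<forall>r\<in>states D. \<forall>a\<in>alpha D. trans D r a \<in> states D)"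

lemma is_dfa_iff:
  "is_dfa D \<longleftrightarrow> is_complete_dfa D \<and> (\<forall>r\<in>states D. \<exists>w\<in>lists (alpha D). delta_hat D (init D) w = r)"
  by (auto simp: is_dfa_def is_complete_dfa_def)

lemma delta_hat_in_states:
  assumes "is_complete_dfa D" "r \<in> states D" "w \<in> lists (alpha D)"
  shows "delta_hat D r w \<in> states D"
  using assms(2,3)
proof (induction w arbitrary: r)
  case (Cons a w)
  then show ?case using assms(1) by (simp add: is_complete_dfa_def)
qed simp

definition reachable_states :: "('q, 'a) dfa \<Rightarrow> 'q set" where
  "reachable_states D = {delta_hat D (init D) w | w. w \<in> lists (alpha D)}"

definition reachable_part :: "('q, 'a) dfa \<Rightarrow> ('q, 'a) dfa" where
  "reachable_part D = D\<lparr>states := reachable_states D, accept := accept D \<inter> reachable_states D\<rparr>"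

lemma reachable_states_subset:
  "is_complete_dfa D \<Longrightarrow> reachable_states D \<subseteq> states D"
  by (auto simp: reachable_states_def is_complete_dfa_def intro: delta_hat_in_states)

lemma delta_hat_reachable_part [simp]: "delta_hat (reachable_part D) = delta_hat D"
  by (simp add: delta_hat_def reachable_part_def fun_eq_iff)

lemma is_dfa_reachable_part:
  assumes "is_complete_dfa D"
  shows "is_dfa (reachable_part D)"
proof -
  have "trans D r a \<in> reachable_states D" if "r \<in> reachable_states D" "a \<in> alpha D" for r a
  proof -
    from that obtain w where "w \<in> lists (alpha D)" "r = delta_hat D (init D) w"
      by (auto simp: reachable_states_def)
    then show ?thesis
      using \<open>a \<in> alpha D\<close> unfolding reachable_states_def
      by (intro CollectI exI[of _ "w @ [a]"]) (simp add: delta_hat_append)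
  qed
  moreover have "init D \<in> reachable_states D"
    unfolding reachable_states_def by (intro CollectI exI[of _ "[]"]) simp
  moreover have "\<exists>w\<in>lists (alpha D). delta_hat D (init D) w = r"
    if "r \<in> reachable_states D" for r
    using that by (auto simp: reachable_states_def)
  ultimately show ?thesis
    using assms reachable_states_subset[OF assms]
    unfolding is_dfa_iff is_complete_dfa_def delta_hat_reachable_part
    by (auto simp: reachable_part_def finite_subset)
qed

lemma lang_reachable_part: "lang (reachable_part D) = lang D"
  unfolding lang_def lang_from_def
  by (simp, auto simp: reachable_part_def reachable_states_def)

definition rename_states :: "('q \<Rightarrow> 'p) \<Rightarrow> ('q, 'a) dfa \<Rightarrow> ('p, 'a) dfa" where
  "rename_states f D =
     \<lparr>states = f ` states D, alpha = alpha D,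
      trans = (\<lambda>s a. f (trans D (inv_into (states D) f s) a)),
      init = f (init D), accept = f ` accept D\<rparr>"

lemma delta_hat_rename_states:
  assumes "is_complete_dfa D" "inj_on f (states D)" "r \<in> states D" "w \<in> lists (alpha D)"
  shows "delta_hat (rename_states f D) (f r) w = f (delta_hat D r w)"
  using assms(3,4)
proof (induction w arbitrary: r)
  case (Cons a w)
  then have "trans D r a \<in> states D"
    using assms(1) by (simp add: is_complete_dfa_def)
  with Cons assms(2) show ?case
    by (simp add: rename_states_def)
qed simp

lemma is_dfa_rename_states:
  assumes "is_dfa D" "inj_on f (states D)"
  shows "is_dfa (rename_states f D)"
proof -
  have D: "is_complete_dfa D" using assms(1) by (simp add: is_dfa_iff)
  have "trans (rename_states f D) (f r) a \<in> f ` states D"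
    if "r \<in> states D" "a \<in> alpha D" for r a
    using that D assms(2) by (simp add: rename_states_def is_complete_dfa_def)
  moreover have "\<exists>w\<in>lists (alpha D). delta_hat (rename_states f D) (f (init D)) w = f r"
    if "r \<in> states D" for r
    using that assms delta_hat_rename_states[OF D assms(2)]
    by (metis D is_complete_dfa_def is_dfa_def)
  ultimately show ?thesis
    using D by (auto simp: is_dfa_iff is_complete_dfa_def rename_states_def)
qed

lemma lang_rename_states:
  assumes "is_complete_dfa D" "inj_on f (states D)"
  shows "lang (rename_states f D) = lang D"
proof -
  have "delta_hat (rename_states f D) (f (init D)) w \<in> f ` accept D \<longleftrightarrow>
          delta_hat D (init D) w \<in> accept D"
    if "w \<in> lists (alpha D)" for w
    using that assms delta_hat_rename_states[OF assms] delta_hat_in_states[OF assms(1)]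
    by (simp add: is_complete_dfa_def inj_on_image_mem_iff)
  then show ?thesis
    by (auto simp: lang_def lang_from_def rename_states_def)
qed

lemma f_minimal_card_le:
  fixes D :: "('q, 'a) dfa" and E :: "('p, 'a) dfa"
  assumes "f_minimal D" "is_complete_dfa E" "alpha E = alpha D" "fequiv (lang D) (lang E)"
  shows "card (states D) \<le> card (states E)"
proof -
  let ?R = "reachable_part E"
  have R: "is_dfa ?R" by (rule is_dfa_reachable_part[OF assms(2)])
  then have "finite (states ?R)" by (simp add: is_dfa_def)
  then obtain f :: "'p \<Rightarrow> nat" where f: "inj_on f (states ?R)"
    using finite_imp_inj_to_nat_seg by blast
  let ?N = "rename_states f ?R"
  have "is_dfa ?N" by (rule is_dfa_rename_states[OF R f])
  moreover have "alpha ?N = alpha D"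
    using assms(3) by (simp add: rename_states_def reachable_part_def)
  moreover have "lang ?N = lang E"
    using R f by (simp add: is_dfa_iff lang_rename_states lang_reachable_part)
  ultimately have "card (states D) \<le> card (states ?N)"
    using assms(1,4) by (simp add: f_minimal_def)
  also have "\<dots> = card (states ?R)"
    using f by (simp add: rename_states_def card_image)
  also have "\<dots> \<le> card (states E)"
    using assms(2) reachable_states_subset[OF assms(2)]
    by (simp add: reachable_part_def is_complete_dfa_def card_mono)
  finally show ?thesis .
qed

definition redirect :: "'q \<Rightarrow> 'q \<Rightarrow> 'q \<Rightarrow> 'q" where
  "redirect X Y s = (if s = X then Y else s)"

definition merge_states :: "('q, 'a) dfa \<Rightarrow> 'q \<Rightarrow> 'q \<Rightarrow> ('q, 'a) dfa" where
  "merge_states D X Y =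
     D\<lparr>states := states D - {X}, trans := (\<lambda>r a. redirect X Y (trans D r a)),
       init := redirect X Y (init D), accept := accept D - {X}\<rparr>"

lemma merge_states_simps [simp]:
  "states (merge_states D X Y) = states D - {X}"
  "alpha (merge_states D X Y) = alpha D"
  "trans (merge_states D X Y) r a = redirect X Y (trans D r a)"
  "init (merge_states D X Y) = redirect X Y (init D)"
  "accept (merge_states D X Y) = accept D - {X}"
  by (simp_all add: merge_states_def)

lemma is_complete_dfa_merge_states:
  assumes "is_complete_dfa D" "Y \<in> states D" "Y \<noteq> X"
  shows "is_complete_dfa (merge_states D X Y)"
  using assms by (auto simp: is_complete_dfa_def merge_states_def redirect_def)

lemma delta_hat_merge_states_unreaching:
  assumes "\<not> reaches D r X" "w \<in> lists (alpha D)"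
  shows "delta_hat (merge_states D X Y) r w = delta_hat D r w"
  using assms
proof (induction w arbitrary: r)
  case (Cons a w)
  then have unreaching: "\<not> reaches D (trans D r a) X"
    by (meson reaches_step listsE)
  then have "trans D r a \<noteq> X"
    by auto
  with Cons unreaching show ?case
    by (simp add: redirect_def)
qed simp

lemma delta_hat_merge_states_cases:
  "delta_hat (merge_states D X Y) (redirect X Y r) w = redirect X Y (delta_hat D r w) \<or>
   (\<exists>u v. w = u @ v \<and> delta_hat D r u = X \<and>
      delta_hat (merge_states D X Y) (redirect X Y r) w = delta_hat (merge_states D X Y) Y v)"
proof (induction w arbitrary: r)
  case (Cons a w)
  show ?case
  proof (cases "r = X")
    case True
    then show ?thesis
      by (intro disjI2 exI[of _ "[]"] exI[of _ "a # w"]) (simp add: redirect_def)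
  next
    case False
    then have "delta_hat (merge_states D X Y) (redirect X Y r) (a # w) =
               delta_hat (merge_states D X Y) (redirect X Y (trans D r a)) w"
      by (simp add: redirect_def)
    with Cons.IH[of "trans D r a"] show ?thesis
      by (metis append_Cons delta_hat_Cons)
  qed
qed simp

lemma fequiv_lang_merge_states:
  assumes "X \<in> finite_part D" "\<not> reaches D Y X"
    and "fequiv (lang_from D X) (lang_from D Y)"
  shows "fequiv (lang D) (lang (merge_states D X Y))"
proof -
  let ?M = "merge_states D X Y"
  define U where "U = {u \<in> lists (alpha D). delta_hat D (init D) u = X}"
  define \<Delta> where "\<Delta> = (lang_from D X - lang_from D Y) \<union> (lang_from D Y - lang_from D X)"
  have "finite U" using assms(1) by (simp add: finite_part_def U_def)
  moreover have "finite \<Delta>" using assms(3) by (simp add: fequiv_def \<Delta>_def)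
  moreover have "w \<in> lang D \<longleftrightarrow> w \<in> lang ?M"
    if w: "w \<in> lists (alpha D)" "w \<notin> U \<union> (\<lambda>(u, v). u @ v) ` (U \<times> \<Delta>)" for w
  proof -
    have lang_M: "w \<in> lang ?M \<longleftrightarrow> delta_hat ?M (redirect X Y (init D)) w \<in> accept D - {X}"
      using w(1) by (simp add: lang_def lang_from_def)
    from delta_hat_merge_states_cases[of D X Y "init D" w] show ?thesis
    proof (elim disjE exE conjE)
      assume "delta_hat ?M (redirect X Y (init D)) w = redirect X Y (delta_hat D (init D) w)"
      moreover have "delta_hat D (init D) w \<noteq> X" using w by (simp add: U_def)
      ultimately show ?thesis
        using w(1) lang_M by (simp add: lang_def lang_from_def redirect_def)
    next
      fix u v
      assume uv: "w = u @ v" "delta_hat D (init D) u = X"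
        and run: "delta_hat ?M (redirect X Y (init D)) w = delta_hat ?M Y v"
      have v: "v \<in> lists (alpha D)" and "u \<in> U" using w(1) uv by (auto simp: U_def)
      then have "v \<notin> \<Delta>" using w uv by blast
      moreover have "w \<in> lang D \<longleftrightarrow> v \<in> lang_from D X"
        using w(1) uv v by (simp add: lang_def lang_from_def delta_hat_append)
      moreover have "delta_hat ?M Y v = delta_hat D Y v" "delta_hat D Y v \<noteq> X"
        using delta_hat_merge_states_unreaching[OF assms(2) v] assms(2) v
        by (auto simp: reaches_def)
      then have "w \<in> lang ?M \<longleftrightarrow> v \<in> lang_from D Y"
        using lang_M run v by (simp add: lang_from_def)
      ultimately show ?thesis by (auto simp: \<Delta>_def)
    qed
  qed
  then have "(lang D - lang ?M) \<union> (lang ?M - lang D) \<subseteq> U \<union> (\<lambda>(u, v). u @ v) ` (U \<times> \<Delta>)"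
    by (auto simp: lang_def lang_from_def)
  ultimately show ?thesis
    unfolding fequiv_def by (blast intro: finite_subset)
qed

lemma f_minimal_reaches_fequiv_state:
  assumes "f_minimal D" "X \<in> finite_part D" "Y \<in> states D" "X \<noteq> Y"
    and "fequiv (lang_from D X) (lang_from D Y)"
  shows "reaches D Y X"
proof (rule ccontr)
  assume "\<not> reaches D Y X"
  let ?M = "merge_states D X Y"
  have D: "is_complete_dfa D" using assms(1) by (simp add: f_minimal_def is_dfa_iff)
  have "card (states D) \<le> card (states ?M)"
  proof (rule f_minimal_card_le[OF assms(1)])
    show "is_complete_dfa ?M" using D assms(3,4) by (simp add: is_complete_dfa_merge_states)
    show "alpha ?M = alpha D" by simp
    show "fequiv (lang D) (lang ?M)"
      using fequiv_lang_merge_states[OF assms(2) \<open>\<not> reaches D Y X\<close> assms(5)] .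
  qed
  moreover have "X \<in> states D"
    using assms(2) by (simp add: finite_part_def)
  then have "card (states ?M) < card (states D)"
    using D by (metis card_Diff1_less is_complete_dfa_def merge_states_simps(1))
  ultimately show False by simp
qed

lemma finite_part_if_reaches:
  assumes "r \<in> states D" "reaches D r s" "s \<in> finite_part D"
  shows "r \<in> finite_part D"
proof -
  obtain w where w: "w \<in> lists (alpha D)" "delta_hat D r w = s"
    using assms(2) by (auto simp: reaches_def)
  let ?P = "\<lambda>t. {u \<in> lists (alpha D). delta_hat D (init D) u = t}"
  have "(\<lambda>u. u @ w) ` ?P r \<subseteq> ?P s"
    using w by (auto simp: delta_hat_append)
  moreover have "finite (?P s)"
    using assms(3) by (simp add: finite_part_def)
  ultimately have "finite ((\<lambda>u. u @ w) ` ?P r)"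
    by (rule finite_subset)
  moreover have "inj_on (\<lambda>u. u @ w) (?P r)"
    by (simp add: inj_on_def)
  ultimately have "finite (?P r)"
    by (rule finite_imageD)
  with assms(1) show ?thesis
    by (simp add: finite_part_def)
qed

lemma finite_part_no_loop:
  assumes "is_dfa D" "X \<in> finite_part D" "z \<in> lists (alpha D)" "delta_hat D X z = X"
  shows "z = []"
proof (rule ccontr)
  assume "z \<noteq> []"
  obtain u where u: "u \<in> lists (alpha D)" "delta_hat D (init D) u = X"
    using assms(1,2) unfolding is_dfa_def finite_part_def by blast
  let ?pump = "\<lambda>n. u @ concat (replicate n z)"
  have "delta_hat D X (concat (replicate n z)) = X" for n
    by (induction n) (simp_all add: delta_hat_append assms(4))
  then have "range ?pump \<subseteq> {w \<in> lists (alpha D). delta_hat D (init D) w = X}"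
    using u assms(3) by (auto simp: delta_hat_append)
  moreover have "inj ?pump"
  proof (rule injI)
    fix m n assume "?pump m = ?pump n"
    then have "length (concat (replicate m z)) = length (concat (replicate n z))"
      by simp
    then have "m * length z = n * length z"
      by (simp add: length_concat sum_list_replicate)
    then show "m = n" using \<open>z \<noteq> []\<close> by simp
  qed
  ultimately have "infinite {w \<in> lists (alpha D). delta_hat D (init D) w = X}"
    by (meson finite_imageD finite_subset infinite_UNIV_nat)
  with assms(2) show False
    by (simp add: finite_part_def)
qed

lemma finite_part_reaches_antisym:
  assumes "is_dfa D" "X \<in> finite_part D" "reaches D X Y" "reaches D Y X"
  shows "X = Y"
proof -
  obtain v w where v: "v \<in> lists (alpha D)" "delta_hat D X v = Y"
    and w: "w \<in> lists (alpha D)" "delta_hat D Y w = X"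
    using assms(3,4) by (auto simp: reaches_def)
  then have "v @ w = []"
    using finite_part_no_loop[OF assms(1,2), of "v @ w"] by (simp add: delta_hat_append)
  with v show ?thesis by simp
qed

theorem mainTheorem9:
  fixes D :: "('q, 'a) dfa" and p q :: 'q
  assumes "f_minimal D"
    and "p \<in> finite_part D"
    and "q \<in> states D"
    and "fequiv (lang_from D p) (lang_from D q)"
  shows "p = q"
proof (rule ccontr)
  assume "p \<noteq> q"
  have D: "is_dfa D" using assms(1) by (simp add: f_minimal_def)
  have "reaches D q p"
    using f_minimal_reaches_fequiv_state[OF assms(1-3) \<open>p \<noteq> q\<close> assms(4)] .
  with assms(3) have "q \<in> finite_part D"
    using assms(2) by (rule finite_part_if_reaches)
  moreover have "p \<in> states D"
    using assms(2) by (simp add: finite_part_def)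
  ultimately have "reaches D p q"
    using f_minimal_reaches_fequiv_state[OF assms(1)] \<open>p \<noteq> q\<close> assms(4)
    by (simp add: fequiv_sym)
  with \<open>reaches D q p\<close> show False
    using finite_part_reaches_antisym[OF D assms(2)] \<open>p \<noteq> q\<close> by blast
qed

end
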